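(* Consider the two-parameter model below in the spin-$1/2$ (qubit) representation, $J_k=\sigma_k/2$, with arbitrary pure initial state $|\psi_0\rangle$ with Bloch vector $\mathbf r_0$ ($|\mathbf r_0|=1$). Then $\det\boldsymbol{\mathcal Q}=\det\boldsymbol{\mathcal D}=4t^2\sin^2\tfrac{Bt}{2}\,(\mathbf n_2\cdot\mathbf r_0)^2$. In particular, the Uhlmann matrix vanishes exactly when the QFIM is singular (for $t\sin\frac{Bt}{2}\ne0$), and whenever the QFIM is invertible the asymptotic incompatibility equals $\mathcal R=1$, for all values of $B,\theta,t$ and every pure initial state.
   Context: Fix $t\in\mathbb R$, let $H=B(\cos\theta J_x+\sin\theta J_z)$, $U=e^{-itH}$, $|\psi_{B,\theta}\rangle=U|\psi_0\rangle$. Let $\mathbf n_\theta=(\cos\theta,0,\sin\theta)$, $\mathbf n_1=(\cos\frac{Bt}{2}\sin\theta,-\sin\frac{Bt}{2},-\cos\frac{Bt}{2}\cos\theta)$, $\mathbf n_2=\mathbf n_\theta\times\mathbf n_1$. The Bloch vector is $\mathbf r_0=(\langle\sigma_x\rangle_0,\langle\sigma_y\rangle_0,\langle\sigma_z\rangle_0)$, $\langle X\rangle_0=\langle\psi_0|X|\psi_0\rangle$. With $\mathcal H_l=i(\partial_lU^\dagger)U$, $l\in\{B,\theta\}$, the QFIM is $\mathcal Q_{ll'}=2\langle\{\mathcal H_l,\mathcal H_{l'}\}\rangle_0-4\langle\mathcal H_l\rangle_0\langle\mathcal H_{l'}\rangle_0$, the Uhlmann matrix is $\mathcal D_{ll'}=-2i\langle[\mathcal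 H_l,\mathcal H_{l'}]\rangle_0$, and the AI is $\mathcal R=\max\{|\mu|:\mu\text{ eigenvalue of }\boldsymbol{\mathcal Q}^{-1}\boldsymbol{\mathcal D}\}$ (defined when $\boldsymbol{\mathcal Q}$ is invertible). *)

theory Defs
  imports "HOL-Analysis.Analysis"
begin

type_synonym cmat = "complex^2^2"
type_synonym cvec = "complex^2"

definition mat2 :: "complex \<Rightarrow> complex \<Rightarrow> complex \<Rightarrow> complex \<Rightarrow> cmat" where
  "mat2 a b c d = (\<chi> i j. if i = 1 then (if j = 1 then a else b) else (if j = 1 then c else d))"

definition sigma_x :: cmat where "sigma_x = mat2 0 1 1 0"
definition sigma_y :: cmat where "sigma_y = mat2 0 (-\<i>) \<i> 0"
definition sigma_z :: cmat where "sigma_z = mat2 1 0 0 (-1)"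

definition cscale :: "complex \<Rightarrow> cmat \<Rightarrow> cmat" where
  "cscale c A = (\<chi> i j. c * A$i$j)"

definition adj :: "cmat \<Rightarrow> cmat" where
  "adj A = (\<chi> i j. cnj (A$j$i))"

primrec mpow :: "cmat \<Rightarrow> nat \<Rightarrow> cmat" where
  "mpow A 0 = mat 1"
| "mpow A (Suc n) = A ** mpow A n"

definition mexp :: "cmat \<Rightarrow> cmat" where
  "mexp A = (\<Sum>n. (1 / fact n) *\<^sub>R mpow A n)"

definition Jx :: cmat where "Jx = cscale (1/2) sigma_x"
definition Jy :: cmat where "Jy = cscale (1/2) sigma_y"
definition Jz :: cmat where "Jz = cscale (1/2) sigma_z"

definition Ham :: "real \<Rightarrow> real \<Rightarrow> cmat" where
  "Ham B \<theta> = cscale (complex_of_real B)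
      (cscale (complex_of_real (cos \<theta>)) Jx + cscale (complex_of_real (sin \<theta>)) Jz)"

definition Uop :: "real \<Rightarrow> real \<Rightarrow> real \<Rightarrow> cmat" where
  "Uop t B \<theta> = mexp (cscale (- \<i> * complex_of_real t) (Ham B \<theta>))"

definition gen :: "real \<Rightarrow> real \<Rightarrow> real \<Rightarrow> 2 \<Rightarrow> cmat" where
  "gen t B \<theta> l =
     (if l = 1
      then cscale \<i> (vector_derivative (\<lambda>b. adj (Uop t b \<theta>)) (at B)) ** Uop t B \<theta>
      else cscale \<i> (vector_derivative (\<lambda>th. adj (Uop t B th)) (at \<theta>)) ** Uop t B \<theta>)"

definition expect :: "cvec \<Rightarrow> cmat \<Rightarrow> complex" where
  "expect \<psi> X = (\<Sum>i\<in>UNIV. cnj (\<psi>$i) * (X *v \<psi>)$i)"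

definition is_pure_state :: "cvec \<Rightarrow> bool" where
  "is_pure_state \<psi> \<longleftrightarrow> (\<Sum>i\<in>UNIV. (cmod (\<psi>$i))\<^sup>2) = 1"

definition bloch :: "cvec \<Rightarrow> real^3" where
  "bloch \<psi> = vector [Re (expect \<psi> sigma_x), Re (expect \<psi> sigma_y), Re (expect \<psi> sigma_z)]"

definition QFIM :: "real \<Rightarrow> real \<Rightarrow> real \<Rightarrow> cvec \<Rightarrow> cmat" where
  "QFIM t B \<theta> \<psi> = (\<chi> l l'.
     2 * expect \<psi> (gen t B \<theta> l ** gen t B \<theta> l' + gen t B \<theta> l' ** gen t B \<theta> l)
     - 4 * expect \<psi> (gen t B \<theta> l) * expect \<psi> (gen t B \<theta> l'))"

definition Uhlmann :: "real \<Rightarrow> real \<Rightarrow> real \<Rightarrow> cvec \<Rightarrow> cmat" where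
  "Uhlmann t B \<theta> \<psi> = (\<chi> l l'.
     - 2 * \<i> * expect \<psi> (gen t B \<theta> l ** gen t B \<theta> l' - gen t B \<theta> l' ** gen t B \<theta> l))"

definition AI :: "real \<Rightarrow> real \<Rightarrow> real \<Rightarrow> cvec \<Rightarrow> real" where
  "AI t B \<theta> \<psi> = Max {cmod \<mu> | \<mu>.
     det (matrix_inv (QFIM t B \<theta> \<psi>) ** Uhlmann t B \<theta> \<psi> - cscale \<mu> (mat 1)) = 0}"

definition n_theta :: "real \<Rightarrow> real^3" where
  "n_theta \<theta> = vector [cos \<theta>, 0, sin \<theta>]"

definition n_1 :: "real \<Rightarrow> real \<Rightarrow> real \<Rightarrow> real^3" where
  "n_1 t B \<theta> = vector [cos (B*t/2) * sin \<theta>, - sin (B*t/2), - cos (B*t/2) * cos \<theta>]"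

definition n_2 :: "real \<Rightarrow> real \<Rightarrow> real \<Rightarrow> real^3" where
  "n_2 t B \<theta> = cross3 (n_theta \<theta>) (n_1 t B \<theta>)"

end

theory Submission
  imports Defs
begin

text \<open>Since \<open>U = cos (B t/2) - i sin (B t/2) n\<^sub>\<theta>\<cdot>\<sigma>\<close>, both generators are Pauli vectors:
  \<open>\<H>\<^sub>B = h\<^sub>B\<cdot>\<sigma>\<close> with \<open>h\<^sub>B = -(t/2) n\<^sub>\<theta>\<close> and \<open>\<H>\<^sub>\<theta> = h\<^sub>\<theta>\<cdot>\<sigma>\<close> with \<open>h\<^sub>\<theta> = sin (B t/2) n\<^sub>1\<close>.
  Pauli vectors anticommute to \<open>2 (h\<cdot>k)\<close>, commute to \<open>2i (h \<times> k)\<cdot>\<sigma>\<close>, and have expectation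
  \<open>h\<cdot>r\<^sub>0\<close>. Hence \<open>\<Q>\<close> is four times the Gram matrix of the projections of \<open>h\<^sub>B, h\<^sub>\<theta>\<close> onto
  \<open>r\<^sub>0\<^sup>\<bottom>\<close>, and \<open>\<D>\<close> is skew with off-diagonal entry \<open>4 (h\<^sub>B \<times> h\<^sub>\<theta>)\<cdot>r\<^sub>0\<close>. For a unit vector
  \<open>r\<^sub>0\<close> that Gram determinant is \<open>((h\<^sub>B \<times> h\<^sub>\<theta>)\<cdot>r\<^sub>0)\<^sup>2\<close>, so \<open>det \<Q> = det \<D>\<close>, and
  \<open>h\<^sub>B \<times> h\<^sub>\<theta> = -(t/2) sin (B t/2) n\<^sub>2\<close>. Finally \<open>\<Q>\<inverse>\<D>\<close> is a symmetric matrix times a skew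
  one, hence traceless, and has determinant \<open>1\<close>: its eigenvalues are \<open>\<plusminus>i\<close>.\<close>

lemma matrix_mul_uminus_left: "(- A) ** B = - (A ** (B::'a::ring_1^'p^'n))"
  by (simp add: matrix_matrix_mult_def vec_eq_iff sum_negf)

lemma trace_uminus: "trace (- A) = - trace (A::'a::ring_1^'n^'n)"
  by (simp add: trace_def sum_negf)

lemma trace_transpose: "trace (transpose A) = trace (A::'a::semiring_1^'n^'n)"
  by (simp add: trace_def transpose_def)

lemma trace_symmetric_mult_skew:
  fixes S A :: "'a::field_char_0^'n^'n"
  assumes "transpose S = S" and "transpose A = - A"
  shows "trace (S ** A) = 0"
proof -
  have "trace (S ** A) = trace (transpose (S ** A))"
    by (rule trace_transpose[symmetric])
  also have "\<dots> = - trace (A ** S)"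
    using assms by (simp add: matrix_transpose_mul matrix_mul_uminus_left trace_uminus)
  also have "\<dots> = - trace (S ** A)"
    by (metis trace_mul_sym)
  finally have "2 * trace (S ** A) = 0"
    by (simp only: mult_2 eq_neg_iff_add_eq_0)
  then show ?thesis
    by simp
qed

lemma matrix_inv_cancel:
  assumes "invertible (A::'a::semiring_1^'n^'n)"
  shows "A ** matrix_inv A = mat 1" "matrix_inv A ** A = mat 1"
  using someI_ex[OF assms[unfolded invertible_def]] by (simp_all add: matrix_inv_def)

lemma transpose_matrix_inv_symmetric:
  fixes A :: "'a::comm_semiring_1^'n^'n"
  assumes "invertible A" and "transpose A = A"
  shows "transpose (matrix_inv A) = matrix_inv A"
proof -
  have "transpose (matrix_inv A) ** A = mat 1"
    using arg_cong[OF matrix_inv_cancel(1)[OF assms(1)], of transpose] assms(2)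
    by (simp add: matrix_transpose_mul)
  then show ?thesis
    by (metis assms(1) matrix_inv_cancel(1) matrix_mul_assoc matrix_mul_lid matrix_mul_rid)
qed

lemma det_matrix_inv:
  fixes A :: "'a::field^'n^'n"
  assumes "invertible A"
  shows "det (matrix_inv A) = inverse (det A)"
  using arg_cong[OF matrix_inv_cancel(2)[OF assms], of det] invertible_det_nz[of A] assms
  by (simp add: det_mul field_simps)

lemma mat2_nth [simp]:
  "mat2 a b c d $ 1 $ 1 = a" "mat2 a b c d $ 1 $ 2 = b"
  "mat2 a b c d $ 2 $ 1 = c" "mat2 a b c d $ 2 $ 2 = d"
  by (simp_all add: mat2_def)

lemma cmat_eq_iff:
  "(A::cmat) = B \<longleftrightarrow> A$1$1 = B$1$1 \<and> A$1$2 = B$1$2 \<and> A$2$1 = B$2$1 \<and> A$2$2 = B$2$2"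
  by (auto simp: vec_eq_iff forall_2)

lemma mat2_eq_iff [simp]:
  "mat2 a b c d = mat2 a' b' c' d' \<longleftrightarrow> a = a' \<and> b = b' \<and> c = c' \<and> d = d'"
  by (simp add: cmat_eq_iff)

lemma mat_mat2: "(mat x :: cmat) = mat2 x 0 0 x"
  by (simp add: cmat_eq_iff mat_def)

lemma mat2_add [simp]: "mat2 a b c d + mat2 a' b' c' d' = mat2 (a+a') (b+b') (c+c') (d+d')"
  by (simp add: cmat_eq_iff)

lemma mat2_diff [simp]: "mat2 a b c d - mat2 a' b' c' d' = mat2 (a-a') (b-b') (c-c') (d-d')"
  by (simp add: cmat_eq_iff)

lemma mat2_uminus [simp]: "- mat2 a b c d = mat2 (-a) (-b) (-c) (-d)"
  by (simp add: cmat_eq_iff)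

lemma mat2_scaleR [simp]:
  "r *\<^sub>R mat2 a b c d = mat2 (of_real r * a) (of_real r * b) (of_real r * c) (of_real r * d)"
  by (simp add: cmat_eq_iff scaleR_conv_of_real[where 'a=complex])

lemma mat2_cscale [simp]: "cscale z (mat2 a b c d) = mat2 (z * a) (z * b) (z * c) (z * d)"
  by (simp add: cmat_eq_iff cscale_def)

lemma mat2_mult [simp]:
  "mat2 a b c d ** mat2 a' b' c' d' = mat2 (a*a'+b*c') (a*b'+b*d') (c*a'+d*c') (c*b'+d*d')"
  by (simp add: cmat_eq_iff matrix_matrix_mult_def sum_2)

lemma adj_mat2 [simp]: "adj (mat2 a b c d) = mat2 (cnj a) (cnj c) (cnj b) (cnj d)"
  by (simp add: cmat_eq_iff adj_def)

lemma det_mat2 [simp]: "det (mat2 a b c d) = a*d - b*c"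
  by (simp add: det_2)

lemma cmat_as_mat2: "(A::cmat) = mat2 (A$1$1) (A$1$2) (A$2$1) (A$2$2)"
  by (simp add: cmat_eq_iff)

lemma det_sub_scalar_cmat:
  "det ((A::cmat) - cscale \<mu> (mat 1)) = \<mu>\<^sup>2 - trace A * \<mu> + det A"
  by (subst (1 2 3) cmat_as_mat2) (simp add: mat_mat2 trace_def sum_2 power2_eq_square algebra_simps)

lemma eigenvalue_moduli_inv_mult_skew:
  fixes Q D :: cmat
  assumes "invertible Q" and "transpose Q = Q" and "transpose D = - D" and "det D = det Q"
  shows "{cmod \<mu> | \<mu>. det (matrix_inv Q ** D - cscale \<mu> (mat 1)) = 0} = {1}"
proof -
  have "trace (matrix_inv Q ** D) = 0"
    using assms by (simp add: trace_symmetric_mult_skew transpose_matrix_inv_symmetric)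
  moreover have "det (matrix_inv Q ** D) = 1"
    using assms invertible_det_nz[of Q] by (simp add: det_mul det_matrix_inv)
  ultimately have charpoly: "det (matrix_inv Q ** D - cscale \<mu> (mat 1)) = \<mu>\<^sup>2 + 1" for \<mu>
    by (simp add: det_sub_scalar_cmat)
  have "cmod \<mu> = 1" if "\<mu>\<^sup>2 = -1" for \<mu>
    using arg_cong[OF that, of cmod] by (simp add: norm_power abs_square_eq_1)
  moreover have "(\<i>::complex)\<^sup>2 + 1 = 0"
    by simp
  ultimately show ?thesis
    unfolding charpoly by (auto simp: add_eq_0_iff2 intro!: exI[of _ \<i>])
qed

lemma mpow_scaleR_square_minus_one:
  fixes N :: cmat
  assumes "N ** N = - mat 1"
  shows "mpow (a *\<^sub>R N) n = Re ((\<i> * a) ^ n) *\<^sub>R mat 1 + Im ((\<i> * a) ^ n) *\<^sub>R N"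
proof (induction n)
  case 0
  then show ?case by simp
next
  case (Suc n)
  define w where "w = (\<i> * complex_of_real a) ^ n"
  have "mpow (a *\<^sub>R N) (Suc n) = (a *\<^sub>R N) ** (Re w *\<^sub>R mat 1 + Im w *\<^sub>R N)"
    using Suc by (simp add: w_def)
  also have "\<dots> = (a * Re w) *\<^sub>R N + (a * Im w) *\<^sub>R (N ** N)"
    by (simp add: matrix_add_ldistrib matrix_scalar_ac scalar_matrix_assoc[symmetric] mult.commute)
  also have "\<dots> = Re ((\<i> * a) * w) *\<^sub>R mat 1 + Im ((\<i> * a) * w) *\<^sub>R N"
    by (simp add: assms algebra_simps)
  finally show ?case
    by (simp add: w_def)
qed

text \<open>Euler's formula: since \<open>N\<close> squares to \<open>-1\<close>, the exponential series of \<open>a N\<close> is the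
  image of the series of \<open>exp (i a)\<close> under the bounded real-linear map \<open>z \<mapsto> Re z + Im z N\<close>.\<close>
lemma mexp_scaleR_square_minus_one:
  fixes N :: cmat
  assumes "N ** N = - mat 1"
  shows "mexp (a *\<^sub>R N) = cos a *\<^sub>R mat 1 + sin a *\<^sub>R N"
proof -
  define L where "L = (\<lambda>z::complex. Re z *\<^sub>R (mat 1::cmat) + Im z *\<^sub>R N)"
  have "bounded_linear L"
    unfolding L_def
    by (intro bounded_linear_add bounded_linear_compose[OF bounded_linear_scaleR_left bounded_linear_Re]
        bounded_linear_compose[OF bounded_linear_scaleR_left bounded_linear_Im])
  then have "(\<lambda>n. L ((\<i> * a) ^ n /\<^sub>R fact n)) sums L (exp (\<i> * a))"
    by (rule bounded_linear.sums[OF _ exp_converges])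
  moreover have "L ((\<i> * a) ^ n /\<^sub>R fact n) = (1 / fact n) *\<^sub>R mpow (a *\<^sub>R N) n" for n
    by (simp add: L_def mpow_scaleR_square_minus_one[OF assms] scaleR_add_right divide_inverse_commute)
  ultimately have "mexp (a *\<^sub>R N) = L (exp (\<i> * a))"
    unfolding mexp_def by (simp add: sums_iff)
  then show ?thesis
    by (simp add: L_def Re_exp Im_exp)
qed

definition pauli :: "real^3 \<Rightarrow> cmat" where
  "pauli h = h$1 *\<^sub>R sigma_x + h$2 *\<^sub>R sigma_y + h$3 *\<^sub>R sigma_z"

lemma pauli_mat2:
  "pauli h = mat2 (h$3) (h$1 - \<i> * h$2) (h$1 + \<i> * h$2) (- h$3)"
  by (simp add: pauli_def sigma_x_def sigma_y_def sigma_z_def)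

lemma adj_pauli [simp]: "adj (pauli h) = pauli h"
  by (simp add: pauli_mat2 complex_cnj_diff complex_cnj_add)

lemma pauli_anticommutator: "pauli h ** pauli k + pauli k ** pauli h = (2 * (h \<bullet> k)) *\<^sub>R mat 1"
  by (simp add: pauli_mat2 mat_mat2 inner_vec_def sum_3 complex_eq_iff algebra_simps)

lemma pauli_commutator: "pauli h ** pauli k - pauli k ** pauli h = cscale (2 * \<i>) (pauli (cross3 h k))"
  by (simp add: pauli_mat2 cross3_def complex_eq_iff algebra_simps)

lemma expect_mat2:
  "expect \<psi> (mat2 a b c d) = cnj (\<psi>$1) * (a * \<psi>$1 + b * \<psi>$2) + cnj (\<psi>$2) * (c * \<psi>$1 + d * \<psi>$2)"
  by (simp add: expect_def sum_2 matrix_vector_mult_def)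

lemma expect_add: "expect \<psi> (X + Y) = expect \<psi> X + expect \<psi> Y"
  by (simp add: expect_def matrix_vector_mult_def sum.distrib algebra_simps)

lemma expect_diff: "expect \<psi> (X - Y) = expect \<psi> X - expect \<psi> Y"
  by (simp add: expect_def matrix_vector_mult_def sum_subtractf algebra_simps)

lemma expect_scaleR: "expect \<psi> (r *\<^sub>R X) = of_real r * expect \<psi> X"
  by (simp add: expect_def matrix_vector_mult_def sum_distrib_left scaleR_conv_of_real[where 'a=complex]
      algebra_simps)

lemma expect_cscale: "expect \<psi> (cscale z X) = z * expect \<psi> X"
  by (simp add: expect_def matrix_vector_mult_def cscale_def sum_distrib_left algebra_simps)

lemma is_pure_state_iff:
  "is_pure_state \<psi> \<longleftrightarrow> (Re (\<psi>$1))\<^sup>2 + (Im (\<psi>$1))\<^sup>2 + (Re (\<psi>$2))\<^sup>2 + (Im (\<psi>$2))\<^sup>2 = 1"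
  by (simp add: is_pure_state_def sum_2 cmod_power2 add.assoc)

lemma expect_mat_1: "is_pure_state \<psi> \<Longrightarrow> expect \<psi> (mat 1) = 1"
  by (simp add: is_pure_state_iff mat_mat2 expect_mat2 complex_eq_iff power2_eq_square algebra_simps)

lemma expect_pauli: "expect \<psi> (pauli h) = of_real (h \<bullet> bloch \<psi>)"
  by (simp add: pauli_def expect_add expect_scaleR bloch_def inner_vec_def sum_3 complex_eq_iff
      expect_mat2 sigma_x_def sigma_y_def sigma_z_def algebra_simps)

lemma inner_bloch_self: "is_pure_state \<psi> \<Longrightarrow> bloch \<psi> \<bullet> bloch \<psi> = 1"
proof -
  assume "is_pure_state \<psi>"
  moreover have "bloch \<psi> \<bullet> bloch \<psi> =
      ((Re (\<psi>$1))\<^sup>2 + (Im (\<psi>$1))\<^sup>2 + (Re (\<psi>$2))\<^sup>2 + (Im (\<psi>$2))\<^sup>2)\<^sup>2"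
    by (simp add: bloch_def expect_mat2 sigma_x_def sigma_y_def sigma_z_def inner_vec_def sum_3
        algebra_simps power2_eq_square)
  ultimately show ?thesis
    by (simp add: is_pure_state_iff)
qed

lemma gram_det_projected_eq_triple_product_sq:
  fixes h k r :: "real^3"
  assumes "r \<bullet> r = 1"
  shows "(h \<bullet> h - (h \<bullet> r)\<^sup>2) * (k \<bullet> k - (k \<bullet> r)\<^sup>2) - (h \<bullet> k - (h \<bullet> r) * (k \<bullet> r))\<^sup>2
    = (cross3 h k \<bullet> r)\<^sup>2"
proof -
  have "r$1 * r$1 + r$2 * r$2 + r$3 * r$3 = 1"
    using assms by (simp add: inner_vec_def sum_3)
  then show ?thesis
    unfolding inner_vec_def sum_3 cross3_def by simp algebra
qed

lemma transpose_QFIM: "transpose (QFIM t B \<theta> \<psi>) = QFIM t B \<theta> \<psi>"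
  by (simp add: transpose_def QFIM_def vec_eq_iff add.commute mult.commute)

lemma transpose_Uhlmann: "transpose (Uhlmann t B \<theta> \<psi>) = - Uhlmann t B \<theta> \<psi>"
  by (simp add: transpose_def Uhlmann_def vec_eq_iff expect_diff algebra_simps)

lemma QFIM_pauli:
  fixes h :: "2 \<Rightarrow> real^3"
  assumes "\<And>l. gen t B \<theta> l = pauli (h l)" and "is_pure_state \<psi>"
  shows "QFIM t B \<theta> \<psi> $ l $ l' =
    of_real (4 * (h l \<bullet> h l' - (h l \<bullet> bloch \<psi>) * (h l' \<bullet> bloch \<psi>)))"
  using assms by (simp add: QFIM_def pauli_anticommutator expect_scaleR expect_mat_1 expect_pauli)

lemma Uhlmann_pauli:
  fixes h :: "2 \<Rightarrow> real^3"
  assumes "\<And>l. gen t B \<theta> l = pauli (h l)"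
  shows "Uhlmann t B \<theta> \<psi> $ l $ l' = of_real (4 * (cross3 (h l) (h l') \<bullet> bloch \<psi>))"
  using assms by (simp add: Uhlmann_def pauli_commutator expect_cscale expect_pauli)

lemma det_QFIM_pauli:
  fixes h :: "2 \<Rightarrow> real^3"
  assumes "\<And>l. gen t B \<theta> l = pauli (h l)" and "is_pure_state \<psi>"
  shows "det (QFIM t B \<theta> \<psi>) = of_real ((4 * (cross3 (h 1) (h 2) \<bullet> bloch \<psi>))\<^sup>2)"
proof -
  have "det (QFIM t B \<theta> \<psi>) = of_real (16 *
      ((h 1 \<bullet> h 1 - (h 1 \<bullet> bloch \<psi>)\<^sup>2) * (h 2 \<bullet> h 2 - (h 2 \<bullet> bloch \<psi>)\<^sup>2)
       - (h 1 \<bullet> h 2 - (h 1 \<bullet> bloch \<psi>) * (h 2 \<bullet> bloch \<psi>))\<^sup>2))"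
    by (simp add: det_2 QFIM_pauli[OF assms] inner_commute power2_eq_square algebra_simps)
  then show ?thesis
    using gram_det_projected_eq_triple_product_sq[OF inner_bloch_self[OF assms(2)]]
    by (simp add: power_mult_distrib)
qed

lemma det_Uhlmann_pauli:
  fixes h :: "2 \<Rightarrow> real^3"
  assumes "\<And>l. gen t B \<theta> l = pauli (h l)"
  shows "det (Uhlmann t B \<theta> \<psi>) = of_real ((4 * (cross3 (h 1) (h 2) \<bullet> bloch \<psi>))\<^sup>2)"
  by (simp add: det_2 Uhlmann_pauli[OF assms] cross_skew[of "h 2"] power2_eq_square)

lemma Uhlmann_eq_0_pauli:
  fixes h :: "2 \<Rightarrow> real^3"
  assumes "\<And>l. gen t B \<theta> l = pauli (h l)"
  shows "Uhlmann t B \<theta> \<psi> = 0 \<longleftrightarrow> cross3 (h 1) (h 2) \<bullet> bloch \<psi> = 0"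
  by (simp add: cmat_eq_iff Uhlmann_pauli[OF assms] cross_skew[of "h 2"])

lemma pauli_n_theta_square: "pauli (n_theta \<theta>) ** pauli (n_theta \<theta>) = mat 1"
  using sin_cos_squared_add[of \<theta>]
  by (simp add: pauli_mat2 n_theta_def mat_mat2 complex_eq_iff power2_eq_square)

lemma Uop_eq: "Uop t B \<theta> = cos (B*t/2) *\<^sub>R mat 1 + sin (B*t/2) *\<^sub>R cscale (-\<i>) (pauli (n_theta \<theta>))"
proof -
  have "cscale (- \<i> * t) (Ham B \<theta>) = (B*t/2) *\<^sub>R cscale (-\<i>) (pauli (n_theta \<theta>))"
    by (simp add: Ham_def Jx_def Jz_def sigma_x_def sigma_z_def pauli_mat2 n_theta_def algebra_simps)
  moreover have "cscale (-\<i>) (pauli (n_theta \<theta>)) ** cscale (-\<i>) (pauli (n_theta \<theta>)) = - mat 1"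
    using pauli_n_theta_square[of \<theta>]
    by (simp add: pauli_mat2 mat_mat2 algebra_simps)
  ultimately show ?thesis
    unfolding Uop_def by (simp add: mexp_scaleR_square_minus_one)
qed

lemma adj_Uop:
  "adj (Uop t B \<theta>) = cos (B*t/2) *\<^sub>R mat 1
     + (sin (B*t/2) * cos \<theta>) *\<^sub>R cscale \<i> sigma_x + (sin (B*t/2) * sin \<theta>) *\<^sub>R cscale \<i> sigma_z"
  by (simp add: Uop_eq pauli_mat2 n_theta_def mat_mat2 sigma_x_def sigma_z_def algebra_simps)

lemma vector_derivative_adj_Uop_B:
  "vector_derivative (\<lambda>b. adj (Uop t b \<theta>)) (at B) =
     (- t/2 * sin (B*t/2)) *\<^sub>R mat 1
     + (t/2 * cos (B*t/2) * cos \<theta>) *\<^sub>R cscale \<i> sigma_x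
     + (t/2 * cos (B*t/2) * sin \<theta>) *\<^sub>R cscale \<i> sigma_z"
  unfolding adj_Uop by (rule vector_derivative_at) (auto intro!: derivative_eq_intros simp: algebra_simps)

lemma vector_derivative_adj_Uop_theta:
  "vector_derivative (\<lambda>th. adj (Uop t B th)) (at \<theta>) =
     (- sin (B*t/2) * sin \<theta>) *\<^sub>R cscale \<i> sigma_x
     + (sin (B*t/2) * cos \<theta>) *\<^sub>R cscale \<i> sigma_z"
  unfolding adj_Uop by (rule vector_derivative_at) (auto intro!: derivative_eq_intros simp: algebra_simps)

definition generator_vec :: "real \<Rightarrow> real \<Rightarrow> real \<Rightarrow> 2 \<Rightarrow> real^3" where
  "generator_vec t B \<theta> l = (if l = 1 then - (t/2) *\<^sub>R n_theta \<theta> else sin (B*t/2) *\<^sub>R n_1 t B \<theta>)"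

lemma gen_B_eq_pauli: "gen t B \<theta> 1 = pauli (- (t/2) *\<^sub>R n_theta \<theta>)"
  unfolding gen_def vector_derivative_adj_Uop_B
  by (simp add: Uop_eq pauli_mat2 n_theta_def mat_mat2 sigma_x_def sigma_z_def complex_eq_iff
      algebra_simps)
    (use sin_cos_squared_add[of "B*t/2"] sin_cos_squared_add[of \<theta>] in algebra)

lemma gen_theta_eq_pauli: "gen t B \<theta> 2 = pauli (sin (B*t/2) *\<^sub>R n_1 t B \<theta>)"
  unfolding gen_def vector_derivative_adj_Uop_theta
  by (simp add: Uop_eq pauli_mat2 n_theta_def n_1_def mat_mat2 sigma_x_def sigma_z_def
      complex_eq_iff algebra_simps)
    (use sin_cos_squared_add[of "B*t/2"] sin_cos_squared_add[of \<theta>] in algebra)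

lemma gen_eq_pauli_generator_vec: "gen t B \<theta> l = pauli (generator_vec t B \<theta> l)"
  using exhaust_2[of l] by (auto simp: generator_vec_def gen_B_eq_pauli gen_theta_eq_pauli)

lemma cross_generator_vec:
  "cross3 (generator_vec t B \<theta> 1) (generator_vec t B \<theta> 2) = (- t/2 * sin (B*t/2)) *\<^sub>R n_2 t B \<theta>"
  by (simp add: generator_vec_def n_2_def cross_mult_left cross_mult_right)

theorem mainTheorem4:
  fixes t B \<theta> :: real and \<psi>0 :: cvec
  assumes "is_pure_state \<psi>0"
  shows "det (QFIM t B \<theta> \<psi>0) =
           complex_of_real (4 * t\<^sup>2 * (sin (B*t/2))\<^sup>2 * (n_2 t B \<theta> \<bullet> bloch \<psi>0)\<^sup>2)
       \<and> det (Uhlmann t B \<theta> \<psi>0) =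
           complex_of_real (4 * t\<^sup>2 * (sin (B*t/2))\<^sup>2 * (n_2 t B \<theta> \<bullet> bloch \<psi>0)\<^sup>2)
       \<and> (t * sin (B*t/2) \<noteq> 0 \<longrightarrow>
            (Uhlmann t B \<theta> \<psi>0 = 0 \<longleftrightarrow> det (QFIM t B \<theta> \<psi>0) = 0))
       \<and> (invertible (QFIM t B \<theta> \<psi>0) \<longrightarrow> AI t B \<theta> \<psi>0 = 1)"
proof -
  note gen = gen_eq_pauli_generator_vec[of t B \<theta>]
  have triple: "4 * (cross3 (generator_vec t B \<theta> 1) (generator_vec t B \<theta> 2) \<bullet> bloch \<psi>0)
      = - 2 * t * sin (B*t/2) * (n_2 t B \<theta> \<bullet> bloch \<psi>0)"
    by (simp add: cross_generator_vec)
  have detQ: "det (QFIM t B \<theta> \<psi>0) =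
      complex_of_real (4 * t\<^sup>2 * (sin (B*t/2))\<^sup>2 * (n_2 t B \<theta> \<bullet> bloch \<psi>0)\<^sup>2)"
    unfolding det_QFIM_pauli[OF gen assms] triple by (simp add: power_mult_distrib)
  moreover have detD: "det (Uhlmann t B \<theta> \<psi>0) = det (QFIM t B \<theta> \<psi>0)"
    by (simp add: det_Uhlmann_pauli[OF gen] det_QFIM_pauli[OF gen assms])
  moreover have "Uhlmann t B \<theta> \<psi>0 = 0 \<longleftrightarrow> det (QFIM t B \<theta> \<psi>0) = 0"
    \<comment> \<open>holds even without the hypothesis \<open>t sin (B t/2) \<noteq> 0\<close>\<close>
    by (simp add: Uhlmann_eq_0_pauli[OF gen] det_QFIM_pauli[OF gen assms])
  moreover have "AI t B \<theta> \<psi>0 = 1" if "invertible (QFIM t B \<theta> \<psi>0)"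
    using eigenvalue_moduli_inv_mult_skew[OF that transpose_QFIM transpose_Uhlmann detD]
    by (simp add: AI_def)
  ultimately show ?thesis
    by simp
qed

end
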